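(* Let $\Gamma=(V,E)$ be a graph, $M_v$ ($v\in V$) monoids and $M=\Gamma_{v\in V}M_v$. Then each $M_v$ is a unitary submonoid of $M$: for $c\in M_v$ and $a\in M$, if $ac\in M_v$ then $a\in M_v$, and if $ca\in M_v$ then $a\in M_v$.
   Context: A graph $\Gamma=(V,E)$ has vertex set $V$ and irreflexive symmetric edge relation $E$. The graph product $\Gamma_{v\in V}M_v$ of pairwise disjoint monoids $M_v$ is the quotient of their free product by the congruence generated by all pairs $(mn,nm)$ with $m\in M_u$, $n\in M_v$, $(u,v)\in E$. The natural map from each $M_v$ into the graph product is injective, and $M_v$ is identified with its image. *)

theory Defs
  imports "HOL-Algebra.Group"
begin

text \<open>The vertex set is the universe of the type 'v,
the graph is given by a symmetric irreflexive relation E, and the vertex monoids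
are HOL-Algebra monoids M v.  Elements of the free product are represented by words
over the disjoint union of the carriers, i.e. lists of tagged letters (v, m) with
m in the carrier of M v (the tag v makes the monoids pairwise disjoint).\<close>

definition gp_word :: "('v \<Rightarrow> 'a monoid) \<Rightarrow> ('v \<times> 'a) list \<Rightarrow> bool" where
  "gp_word M w \<longleftrightarrow> (\<forall>(v, m) \<in> set w. m \<in> carrier (M v))"

inductive gp_eq :: "('v \<Rightarrow> 'a monoid) \<Rightarrow> ('v \<Rightarrow> 'v \<Rightarrow> bool)
    \<Rightarrow> ('v \<times> 'a) list \<Rightarrow> ('v \<times> 'a) list \<Rightarrow> bool"
  for M E where
  gp_refl: "gp_word M w \<Longrightarrow> gp_eq M E w w"
| gp_sym: "gp_eq M E w w' \<Longrightarrow> gp_eq M E w' w"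
| gp_trans: "gp_eq M E w w' \<Longrightarrow> gp_eq M E w' w'' \<Longrightarrow> gp_eq M E w w''"
| gp_ctxt: "gp_eq M E w w' \<Longrightarrow> gp_word M p \<Longrightarrow> gp_word M q
      \<Longrightarrow> gp_eq M E (p @ w @ q) (p @ w' @ q)"
| gp_unit: "gp_eq M E [(v, \<one>\<^bsub>M v\<^esub>)] []"
| gp_mult: "a \<in> carrier (M v) \<Longrightarrow> b \<in> carrier (M v)
      \<Longrightarrow> gp_eq M E [(v, a), (v, b)] [(v, a \<otimes>\<^bsub>M v\<^esub> b)]"
| gp_comm: "E u v \<Longrightarrow> a \<in> carrier (M u) \<Longrightarrow> b \<in> carrier (M v)
      \<Longrightarrow> gp_eq M E [(u, a), (v, b)] [(v, b), (u, a)]"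

definition in_vertex_monoid :: "('v \<Rightarrow> 'a monoid) \<Rightarrow> ('v \<Rightarrow> 'v \<Rightarrow> bool) \<Rightarrow> 'v
    \<Rightarrow> ('v \<times> 'a) list \<Rightarrow> bool" where
  "in_vertex_monoid M E v w \<longleftrightarrow> (\<exists>m \<in> carrier (M v). gp_eq M E w [(v, m)])"

end

theory Submission
  imports Defs
begin

text \<open>Every element of the graph product is represented by a reduced word, unique up to
commuting letters at adjacent vertices.  Left multiplication by a letter (u, x) acts on reduced
words by multiplying x into the first u-letter that can be commuted to the front, and this action
respects all defining relations.  If c a lies in M v, then inserting one v-letter into the reduced
form of a leaves only v-letters, so that reduced form is empty or a single v-letter.  The statement
for a c follows by passing to the opposite monoids and reversing words.\<close>

lemma gp_word_simps [simp]:
  "gp_word M []"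
  "gp_word M ((u, x) # w) \<longleftrightarrow> x \<in> carrier (M u) \<and> gp_word M w"
  "gp_word M (w @ w') \<longleftrightarrow> gp_word M w \<and> gp_word M w'"
  by (auto simp: gp_word_def)

lemma gp_eq_Cons:
  "gp_eq M E w w' \<Longrightarrow> x \<in> carrier (M u) \<Longrightarrow> gp_eq M E ((u, x) # w) ((u, x) # w')"
  using gp_ctxt[of M E w w' "[(u, x)]" "[]"] by simp

lemma gp_eq_append:
  "gp_eq M E w w' \<Longrightarrow> gp_word M q \<Longrightarrow> gp_eq M E (w @ q) (w' @ q)"
  using gp_ctxt[of M E w w' "[]" q] by simp

definition opposite_monoid :: "'a monoid \<Rightarrow> 'a monoid" where
  "opposite_monoid N = N\<lparr>mult := \<lambda>x y. y \<otimes>\<^bsub>N\<^esub> x\<rparr>"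

lemma opposite_monoid_simps [simp]:
  "carrier (opposite_monoid N) = carrier N"
  "\<one>\<^bsub>opposite_monoid N\<^esub> = \<one>\<^bsub>N\<^esub>"
  "x \<otimes>\<^bsub>opposite_monoid N\<^esub> y = y \<otimes>\<^bsub>N\<^esub> x"
  "opposite_monoid (opposite_monoid N) = N"
  by (simp_all add: opposite_monoid_def)

lemma monoid_opposite_monoid: "monoid N \<Longrightarrow> monoid (opposite_monoid N)"
  unfolding monoid_def by (simp add: opposite_monoid_def)

lemma gp_word_rev_opposite: "gp_word (\<lambda>v. opposite_monoid (M v)) (rev w) = gp_word M w"
  by (auto simp: gp_word_def)

lemma gp_eq_rev_opposite:
  assumes "\<And>u v. E u v \<Longrightarrow> E v u" and "gp_eq M E w w'"
  shows "gp_eq (\<lambda>v. opposite_monoid (M v)) E (rev w) (rev w')"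
  using assms(2)
proof (induction rule: gp_eq.induct)
  case (gp_refl w)
  then show ?case by (simp add: gp_eq.gp_refl gp_word_rev_opposite)
next
  case (gp_ctxt w w' p q)
  then have "gp_eq (\<lambda>v. opposite_monoid (M v)) E (rev q @ rev w @ rev p) (rev q @ rev w' @ rev p)"
    by (simp add: gp_eq.gp_ctxt gp_word_rev_opposite)
  then show ?case by simp
next
  case (gp_unit v)
  show ?case using gp_eq.gp_unit[of "\<lambda>v. opposite_monoid (M v)" E v] by simp
next
  case (gp_mult a v b)
  then show ?case using gp_eq.gp_mult[of b "\<lambda>v. opposite_monoid (M v)" v a E] by simp
next
  case (gp_comm u v a b)
  then show ?case using gp_eq.gp_comm[of E v u b "\<lambda>v. opposite_monoid (M v)" a] assms(1) by simp
qed (auto intro: gp_eq.gp_sym gp_eq.gp_trans)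

lemma in_vertex_monoid_rev_opposite:
  assumes "\<And>u v. E u v \<Longrightarrow> E v u"
  shows "in_vertex_monoid (\<lambda>v. opposite_monoid (M v)) E v (rev w) \<longleftrightarrow> in_vertex_monoid M E v w"
proof
  assume "in_vertex_monoid (\<lambda>v. opposite_monoid (M v)) E v (rev w)"
  then obtain m where "m \<in> carrier (M v)" "gp_eq (\<lambda>v. opposite_monoid (M v)) E (rev w) [(v, m)]"
    by (auto simp: in_vertex_monoid_def)
  then show "in_vertex_monoid M E v w"
    using gp_eq_rev_opposite[OF assms \<open>gp_eq _ E (rev w) _\<close>] by (auto simp: in_vertex_monoid_def)
next
  assume "in_vertex_monoid M E v w"
  then obtain m where "m \<in> carrier (M v)" "gp_eq M E w [(v, m)]"
    by (auto simp: in_vertex_monoid_def)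
  then show "in_vertex_monoid (\<lambda>v. opposite_monoid (M v)) E v (rev w)"
    using gp_eq_rev_opposite[OF assms \<open>gp_eq M E w _\<close>] by (auto simp: in_vertex_monoid_def)
qed

locale graph_product =
  fixes M :: "'v \<Rightarrow> 'a monoid" and E :: "'v \<Rightarrow> 'v \<Rightarrow> bool"
  assumes vertex_monoid: "\<And>v. monoid (M v)"
    and E_sym: "\<And>u v. E u v \<Longrightarrow> E v u"
    and E_irrefl: "\<And>v. \<not> E v v"
begin

text \<open>Some u-letter of r can be commuted to the front of r.\<close>

fun accessible :: "'v \<Rightarrow> ('v \<times> 'a) list \<Rightarrow> bool" where
  "accessible u [] = False"
| "accessible u ((w, y) # r) \<longleftrightarrow> w = u \<or> (E u w \<and> accessible u r)"

fun reduced :: "('v \<times> 'a) list \<Rightarrow> bool" where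
  "reduced [] = True"
| "reduced ((u, x) # r) \<longleftrightarrow>
     x \<in> carrier (M u) \<and> x \<noteq> \<one>\<^bsub>M u\<^esub> \<and> \<not> accessible u r \<and> reduced r"

fun insert_letter :: "'v \<Rightarrow> 'a \<Rightarrow> ('v \<times> 'a) list \<Rightarrow> ('v \<times> 'a) list" where
  "insert_letter u x [] = [(u, x)]"
| "insert_letter u x ((w, y) # r) =
     (if w = u then (if x \<otimes>\<^bsub>M u\<^esub> y = \<one>\<^bsub>M u\<^esub> then r else (u, x \<otimes>\<^bsub>M u\<^esub> y) # r)
      else if E u w then (w, y) # insert_letter u x r
      else (u, x) # (w, y) # r)"

fun act_letter :: "'v \<times> 'a \<Rightarrow> ('v \<times> 'a) list \<Rightarrow> ('v \<times> 'a) list" where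
  "act_letter (u, x) r = (if x = \<one>\<^bsub>M u\<^esub> then r else insert_letter u x r)"

abbreviation act_word :: "('v \<times> 'a) list \<Rightarrow> ('v \<times> 'a) list \<Rightarrow> ('v \<times> 'a) list" where
  "act_word w r \<equiv> foldr act_letter w r"

inductive swap :: "('v \<times> 'a) list \<Rightarrow> ('v \<times> 'a) list \<Rightarrow> bool" where
  "E u w \<Longrightarrow> swap (p @ (u, a) # (w, b) # q) (p @ (w, b) # (u, a) # q)"

abbreviation trace_eq :: "('v \<times> 'a) list \<Rightarrow> ('v \<times> 'a) list \<Rightarrow> bool" where
  "trace_eq \<equiv> swap\<^sup>*\<^sup>*"

lemma swap_sym: "swap s t \<Longrightarrow> swap t s"
  by (induction rule: swap.induct) (auto intro: swap.intros E_sym)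

lemma trace_eq_sym: "trace_eq s t \<Longrightarrow> trace_eq t s"
  by (induction rule: rtranclp_induct)
    (auto intro: swap_sym converse_rtranclp_into_rtranclp)

lemma swap_Cons: "swap s t \<Longrightarrow> swap (z # s) (z # t)"
  by (induction rule: swap.induct) (metis append_Cons swap.intros)

lemma trace_eq_Cons: "trace_eq s t \<Longrightarrow> trace_eq (z # s) (z # t)"
  by (induction rule: rtranclp_induct) (auto intro: swap_Cons rtranclp.rtrancl_into_rtrancl)

lemma trace_eq_swap_head: "E u w \<Longrightarrow> trace_eq ((u, a) # (w, b) # q) ((w, b) # (u, a) # q)"
  using swap.intros[of u w "[]" a b q] by auto

lemma swap_set: "swap s t \<Longrightarrow> set s = set t"
  by (induction rule: swap.induct) auto

lemma trace_eq_set: "trace_eq s t \<Longrightarrow> set s = set t"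
  by (induction rule: rtranclp_induct) (auto dest: swap_set)

lemma reduced_gp_word: "reduced r \<Longrightarrow> gp_word M r"
  by (induction r rule: reduced.induct) auto

lemma accessible_insert_letter:
  "z \<noteq> u \<Longrightarrow> E z u \<Longrightarrow> accessible z (insert_letter u x r) = accessible z r"
  by (induction u x r rule: insert_letter.induct) auto

lemma reduced_insert_letter:
  assumes "reduced r" "x \<in> carrier (M u)" "x \<noteq> \<one>\<^bsub>M u\<^esub>"
  shows "reduced (insert_letter u x r)"
  using assms
proof (induction u x r rule: insert_letter.induct)
  case (2 u x w y r)
  interpret monoid "M u" by (rule vertex_monoid)
  show ?case
    using 2 accessible_insert_letter[of w u x r] E_sym[of u w] by auto
qed simp

lemma reduced_act_word: "gp_word M w \<Longrightarrow> reduced r \<Longrightarrow> reduced (act_word w r)"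
  by (induction w) (auto intro: reduced_insert_letter)

lemma vertices_insert_letter:
  "fst ` set r \<subseteq> insert u (fst ` set (insert_letter u x r))"
  by (induction u x r rule: insert_letter.induct) auto

lemma vertices_act_letter:
  "fst ` set r \<subseteq> insert u (fst ` set (act_letter (u, x) r))"
  using vertices_insert_letter by auto

lemma reduced_single_vertex:
  assumes "reduced r" "fst ` set r \<subseteq> {v}"
  shows "r = [] \<or> (\<exists>y \<in> carrier (M v). r = [(v, y)])"
  using assms by (cases r rule: remdups_adj.cases) auto

subsection \<open>The action on trace equivalence classes\<close>

lemma insert_letter_swap_head:
  assumes "E u1 u2"
  shows "trace_eq (insert_letter u x ((u1, a) # (u2, b) # q))
                  (insert_letter u x ((u2, b) # (u1, a) # q))"
proof -
  have "u1 \<noteq> u2" "E u2 u1" using assms E_irrefl E_sym by auto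
  have swap_12: "trace_eq ((u1, a) # (u2, b) # q) ((u2, b) # (u1, a) # q)"
    using assms by (rule trace_eq_swap_head)
  consider "u = u1 \<or> u = u2 \<or> E u u1 = E u u2" | "E u u1" "\<not> E u u2" "u \<noteq> u2"
    | "\<not> E u u1" "E u u2" "u \<noteq> u1"
    by blast
  then show ?thesis
  proof cases
    case 1
    with \<open>u1 \<noteq> u2\<close> \<open>E u2 u1\<close> assms show ?thesis
      by (auto simp: swap_12 trace_eq_swap_head intro: trace_eq_Cons dest: E_sym)
  next
    case 2
    then have "trace_eq ((u1, a) # (u, x) # (u2, b) # q) ((u, x) # (u1, a) # (u2, b) # q)"
      by (simp add: trace_eq_swap_head E_sym)
    also have "trace_eq \<dots> ((u, x) # (u2, b) # (u1, a) # q)"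
      using swap_12 by (rule trace_eq_Cons)
    finally show ?thesis using 2 E_irrefl by auto
  next
    case 3
    then have "trace_eq ((u, x) # (u1, a) # (u2, b) # q) ((u, x) # (u2, b) # (u1, a) # q)"
      using swap_12 by (simp add: trace_eq_Cons)
    also have "trace_eq \<dots> ((u2, b) # (u, x) # (u1, a) # q)"
      using 3 by (simp add: trace_eq_swap_head)
    finally show ?thesis using 3 E_irrefl by auto
  qed
qed

lemma insert_letter_swap: "swap s t \<Longrightarrow> trace_eq (insert_letter u x s) (insert_letter u x t)"
proof (induction rule: swap.induct)
  case (1 u1 u2 p a b q)
  then show ?case
  proof (induction p)
    case Nil
    then show ?case by (simp only: append_Nil insert_letter_swap_head)
  next
    case (Cons z p)
    have "swap (p @ (u1, a) # (u2, b) # q) (p @ (u2, b) # (u1, a) # q)"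
      using Cons.prems by (rule swap.intros)
    with Cons show ?case
      by (cases z) (auto intro: trace_eq_Cons r_into_rtranclp swap_Cons)
  qed
qed

lemma act_letter_trace_eq: "trace_eq s t \<Longrightarrow> trace_eq (act_letter z s) (act_letter z t)"
proof (induction rule: rtranclp_induct)
  case (step t t')
  then have "trace_eq (act_letter z t) (act_letter z t')"
    by (cases z) (auto intro: insert_letter_swap r_into_rtranclp)
  with step.IH show ?case by (rule rtranclp_trans)
qed simp

lemma act_word_trace_eq: "trace_eq s t \<Longrightarrow> trace_eq (act_word p s) (act_word p t)"
  by (induction p) (auto intro: act_letter_trace_eq)

subsection \<open>The action respects the defining relations\<close>

lemma insert_letter_commute:
  "E u w \<Longrightarrow> trace_eq (insert_letter u a (insert_letter w b r)) (insert_letter w b (insert_letter u a r))"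
proof (induction r)
  case Nil
  then show ?case using E_sym E_irrefl[of u] by (auto simp: trace_eq_swap_head)
next
  case (Cons z r)
  have "u \<noteq> w" "E w u" using Cons.prems E_irrefl E_sym by auto
  with Cons show ?case
    by (cases z; cases "E u (fst z)"; cases "E w (fst z)")
      (auto intro: trace_eq_Cons simp: trace_eq_swap_head)
qed

lemma act_letter_commute:
  "E u w \<Longrightarrow> trace_eq (act_letter (u, a) (act_letter (w, b) r)) (act_letter (w, b) (act_letter (u, a) r))"
  using insert_letter_commute by auto

lemma insert_letter_not_accessible:
  "\<not> accessible u r \<Longrightarrow> trace_eq (insert_letter u a r) ((u, a) # r)"
proof (induction r)
  case (Cons z r)
  obtain w y where z: "z = (w, y)" by force
  show ?case
  proof (cases "E u w")
    case True
    with Cons z have "trace_eq (insert_letter u a (z # r)) ((w, y) # (u, a) # r)"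
      by (auto intro: trace_eq_Cons)
    also have "trace_eq \<dots> ((u, a) # (w, y) # r)"
      using True E_sym by (simp add: trace_eq_swap_head)
    finally show ?thesis using z by simp
  next
    case False
    with Cons z show ?thesis by auto
  qed
qed simp

lemma act_letter_Cons_same_vertex:
  assumes "y \<in> carrier (M u)" "y \<noteq> \<one>\<^bsub>M u\<^esub>" "\<not> accessible u r"
  shows "trace_eq (act_letter (u, x) ((u, y) # r)) (act_letter (u, x \<otimes>\<^bsub>M u\<^esub> y) r)"
proof -
  interpret monoid "M u" by (rule vertex_monoid)
  show ?thesis
    using assms insert_letter_not_accessible[of u r] by (auto intro: trace_eq_sym)
qed

lemma act_letter_mult_not_accessible:
  assumes "a \<in> carrier (M u)" "b \<in> carrier (M u)" "\<not> accessible u r"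
  shows "trace_eq (act_letter (u, a) (act_letter (u, b) r)) (act_letter (u, a \<otimes>\<^bsub>M u\<^esub> b) r)"
proof -
  interpret monoid "M u" by (rule vertex_monoid)
  show ?thesis
  proof (cases "b = \<one>\<^bsub>M u\<^esub>")
    case False
    with assms have "trace_eq (act_letter (u, b) r) ((u, b) # r)"
      by (simp add: insert_letter_not_accessible)
    then have "trace_eq (act_letter (u, a) (act_letter (u, b) r)) (act_letter (u, a) ((u, b) # r))"
      by (rule act_letter_trace_eq)
    also have "trace_eq \<dots> (act_letter (u, a \<otimes>\<^bsub>M u\<^esub> b) r)"
      using False assms by (intro act_letter_Cons_same_vertex)
    finally show ?thesis .
  qed (use assms in simp)
qed

lemma act_letter_mult:
  assumes "reduced r" "a \<in> carrier (M u)" "b \<in> carrier (M u)"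
  shows "trace_eq (act_letter (u, a) (act_letter (u, b) r)) (act_letter (u, a \<otimes>\<^bsub>M u\<^esub> b) r)"
  using assms(1)
proof (induction r)
  case Nil
  from assms(2,3) show ?case by (intro act_letter_mult_not_accessible) simp_all
next
  case (Cons z r)
  interpret monoid "M u" by (rule vertex_monoid)
  obtain w y where z: "z = (w, y)" by force
  consider "\<not> accessible u (z # r)" | "w = u" | "w \<noteq> u" "E u w"
    using z by auto
  then show ?case
  proof cases
    case 1
    with assms show ?thesis by (intro act_letter_mult_not_accessible)
  next
    case 2
    with z Cons.prems have y: "y \<in> carrier (M u)" "y \<noteq> \<one>\<^bsub>M u\<^esub>" "\<not> accessible u r"
      by auto
    have "trace_eq (act_letter (u, a) (act_letter (u, b) (z # r)))
        (act_letter (u, a) (act_letter (u, b \<otimes>\<^bsub>M u\<^esub> y) r))"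
      unfolding z 2 by (rule act_letter_trace_eq[OF act_letter_Cons_same_vertex[OF y]])
    also have "trace_eq \<dots> (act_letter (u, a \<otimes>\<^bsub>M u\<^esub> (b \<otimes>\<^bsub>M u\<^esub> y)) r)"
      using assms y by (intro act_letter_mult_not_accessible) auto
    also have "a \<otimes>\<^bsub>M u\<^esub> (b \<otimes>\<^bsub>M u\<^esub> y) = a \<otimes>\<^bsub>M u\<^esub> b \<otimes>\<^bsub>M u\<^esub> y"
      using assms y by (simp add: m_assoc)
    also have "trace_eq (act_letter (u, a \<otimes>\<^bsub>M u\<^esub> b \<otimes>\<^bsub>M u\<^esub> y) r) (act_letter (u, a \<otimes>\<^bsub>M u\<^esub> b) (z # r))"
      unfolding z 2 by (rule trace_eq_sym[OF act_letter_Cons_same_vertex[OF y]])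
    finally show ?thesis .
  next
    case 3
    with z Cons show ?thesis
      by (auto intro: trace_eq_Cons)
  qed
qed

lemma act_word_gp_eq:
  "gp_eq M E w w' \<Longrightarrow> reduced r \<Longrightarrow> trace_eq (act_word w r) (act_word w' r)"
proof (induction arbitrary: r rule: gp_eq.induct)
  case (gp_sym w w')
  then show ?case using trace_eq_sym by blast
next
  case (gp_trans w w' w'')
  then show ?case by (meson rtranclp_trans)
next
  case (gp_ctxt w w' p q)
  then have "trace_eq (act_word w (act_word q r)) (act_word w' (act_word q r))"
    using reduced_act_word by blast
  then show ?case by (simp add: act_word_trace_eq)
next
  case (gp_mult a v b)
  then show ?case using act_letter_mult by simp
next
  case (gp_comm u v a b)
  then show ?case using act_letter_commute by simp
qed simp_all

lemma gp_eq_insert_letter: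
  "reduced r \<Longrightarrow> x \<in> carrier (M u) \<Longrightarrow> gp_eq M E ((u, x) # r) (insert_letter u x r)"
proof (induction u x r rule: insert_letter.induct)
  case (1 u x)
  then show ?case by (simp add: gp_refl)
next
  case (2 u x w y r)
  interpret monoid "M u" by (rule vertex_monoid)
  have r: "gp_word M r" "y \<in> carrier (M w)" using 2 reduced_gp_word by auto
  consider "w = u" | "w \<noteq> u" "E u w" | "w \<noteq> u" "\<not> E u w" by blast
  then show ?case
  proof cases
    case 1
    have "gp_eq M E ([(u, x), (u, y)] @ r) ([(u, x \<otimes>\<^bsub>M u\<^esub> y)] @ r)"
      using 1 2 r by (intro gp_eq_append gp_mult) auto
    moreover have "gp_eq M E ([(u, \<one>\<^bsub>M u\<^esub>)] @ r) ([] @ r)"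
      using r by (intro gp_eq_append gp_unit)
    ultimately show ?thesis using 1 by (auto intro: gp_trans)
  next
    case 2
    have "gp_eq M E ([(u, x), (w, y)] @ r) ([(w, y), (u, x)] @ r)"
      using 2 \<open>x \<in> carrier (M u)\<close> r by (intro gp_eq_append gp_comm) auto
    moreover have "gp_eq M E ((w, y) # (u, x) # r) ((w, y) # insert_letter u x r)"
      using "2.IH" 2 "2.prems" r by (intro gp_eq_Cons) auto
    ultimately show ?thesis using 2 by (auto intro: gp_trans)
  next
    case 3
    then show ?thesis using "2.prems" r by (auto intro: gp_refl)
  qed
qed

lemma gp_eq_act_word: "gp_word M w \<Longrightarrow> gp_eq M E w (act_word w [])"
proof (induction w)
  case Nil
  then show ?case by (simp add: gp_refl)
next
  case (Cons z w)
  obtain u x where z: "z = (u, x)" by force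
  with Cons.prems have w: "gp_word M w" and x: "x \<in> carrier (M u)" by auto
  have r: "reduced (act_word w [])" using w by (simp add: reduced_act_word)
  have "gp_eq M E ((u, x) # w) ((u, x) # act_word w [])"
    using Cons.IH[OF w] x by (rule gp_eq_Cons)
  moreover have "gp_eq M E ((u, x) # act_word w []) (act_letter (u, x) (act_word w []))"
  proof (cases "x = \<one>\<^bsub>M u\<^esub>")
    case True
    then show ?thesis using gp_eq_append[OF gp_unit reduced_gp_word[OF r]] by simp
  qed (use gp_eq_insert_letter r x in simp)
  ultimately show ?case using z by (auto intro: gp_trans)
qed

subsection \<open>Unitarity\<close>

lemma in_vertex_monoid_cancel_left:
  assumes a: "gp_word M a" and c: "c \<in> carrier (M v)"
    and ca: "in_vertex_monoid M E v ((v, c) # a)"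
  shows "in_vertex_monoid M E v a"
proof -
  interpret monoid "M v" by (rule vertex_monoid)
  obtain m where "m \<in> carrier (M v)" and m: "gp_eq M E ((v, c) # a) [(v, m)]"
    using ca by (auto simp: in_vertex_monoid_def)
  define r where "r = act_word a []"
  have r: "reduced r" "gp_eq M E a r"
    using a by (simp_all add: r_def reduced_act_word gp_eq_act_word)
  have "trace_eq (act_letter (v, c) r) (act_letter (v, m) [])"
    using act_word_gp_eq[OF m] by (simp add: r_def)
  then have "fst ` set (act_letter (v, c) r) \<subseteq> {v}"
    by (auto dest!: trace_eq_set split: if_splits)
  then have "fst ` set r \<subseteq> {v}"
    using vertices_act_letter[of r v c] by blast
  then consider "r = []" | y where "y \<in> carrier (M v)" "r = [(v, y)]"
    using reduced_single_vertex[OF r(1)] by blast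
  then show ?thesis
  proof cases
    case 1
    then have "gp_eq M E a [(v, \<one>\<^bsub>M v\<^esub>)]"
      using r(2) gp_trans gp_sym[OF gp_unit] by metis
    then show ?thesis by (auto simp: in_vertex_monoid_def)
  next
    case 2
    then show ?thesis using r(2) by (auto simp: in_vertex_monoid_def)
  qed
qed

lemma in_vertex_monoid_cancel_right:
  assumes a: "gp_word M a" and c: "c \<in> carrier (M v)"
    and ac: "in_vertex_monoid M E v (a @ [(v, c)])"
  shows "in_vertex_monoid M E v a"
proof -
  interpret opposite: graph_product "\<lambda>v. opposite_monoid (M v)" E
    using monoid_opposite_monoid[OF vertex_monoid] E_sym E_irrefl by (rule graph_product.intro)
  let ?M' = "\<lambda>v. opposite_monoid (M v)"
  have "in_vertex_monoid ?M' E v (rev (a @ [(v, c)]))"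
    using ac by (simp only: in_vertex_monoid_rev_opposite[OF E_sym])
  then have "in_vertex_monoid ?M' E v ((v, c) # rev a)"
    by (simp only: rev_append rev.simps append_Cons append_Nil)
  moreover have "gp_word ?M' (rev a)" "c \<in> carrier (?M' v)"
    using a c by (simp_all only: gp_word_rev_opposite opposite_monoid_simps)
  ultimately have "in_vertex_monoid ?M' E v (rev a)"
    using opposite.in_vertex_monoid_cancel_left by blast
  then show ?thesis
    by (simp only: in_vertex_monoid_rev_opposite[OF E_sym])
qed

end

theorem corollary1p2:
  fixes M :: "'v \<Rightarrow> 'a monoid" and E :: "'v \<Rightarrow> 'v \<Rightarrow> bool"
  assumes "\<And>v. monoid (M v)"
    and "\<And>u v. E u v \<Longrightarrow> E v u"
    and "\<And>v. \<not> E v v"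
    and "v \<in> UNIV" and "c \<in> carrier (M v)" and "gp_word M a"
  shows "(in_vertex_monoid M E v (a @ [(v, c)]) \<longrightarrow> in_vertex_monoid M E v a)
       \<and> (in_vertex_monoid M E v ([(v, c)] @ a) \<longrightarrow> in_vertex_monoid M E v a)"
proof -
  interpret graph_product M E
    using assms(1-3) by (rule graph_product.intro)
  show ?thesis
    using in_vertex_monoid_cancel_left[OF assms(6,5)] in_vertex_monoid_cancel_right[OF assms(6,5)]
    by simp
qed

end
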